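(* Let $\theta_0>0$, let $F$ be a probability measure on $(0,\infty)$, let $A_0,A_1,\dots,A_N$ be a measurable partition of $(0,\infty)$ with $m_j:=\inf A_j>0$ for $1\le j\le N$, and let $F_N=\sum_{j=1}^N w_j\delta_{z_j}$ be a probability measure with $z_j\in A_j$ for $j=1,\dots,N$. Then \[ \|p_{\theta_0,F}-p_{\theta_0,F_N}\|_1\le 4\max_{1\le j\le N}\frac{\operatorname{diam}A_j}{m_j}+\sum_{j=1}^N|F(A_j)-w_j|+F(A_0). \]
   Context: For $\theta>0$ and a probability measure $F$ on $(0,\infty)$, $p_{\theta,F}(x,y)=\int z^2\theta e^{-z(x+\theta y)}\,dF(z)$ for $(x,y)\in(0,\infty)^2$. $\|\cdot\|_1$ is the $L^1$ norm with respect to Lebesgue measure on $(0,\infty)^2$. *)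

theory Defs
  imports "HOL-Probability.Probability"
begin

definition pmix :: "real \<Rightarrow> real measure \<Rightarrow> real \<Rightarrow> real \<Rightarrow> real" where
  "pmix \<theta> F x y = (\<integral>z. z\<^sup>2 * \<theta> * exp (- z * (x + \<theta> * y)) \<partial>F)"

definition discrete_mix :: "nat \<Rightarrow> (nat \<Rightarrow> real) \<Rightarrow> (nat \<Rightarrow> real) \<Rightarrow> real measure" where
  "discrete_mix N w z =
     density (count_space UNIV) (\<lambda>t. ennreal (\<Sum>j\<in>{1..N}. if z j = t then w j else 0))"

definition diam_ext :: "real set \<Rightarrow> ennreal" where
  "diam_ext S = (SUP x\<in>S. SUP y\<in>S. ennreal \<bar>x - y\<bar>)"

definition L1_dist :: "(real \<Rightarrow> real \<Rightarrow> real) \<Rightarrow> (real \<Rightarrow> real \<Rightarrow> real) \<Rightarrow> ennreal" where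
  "L1_dist f g = (\<integral>\<^sup>+ q. indicator ({0<..} \<times> {0<..}) q
                    * ennreal \<bar>f (fst q) (snd q) - g (fst q) (snd q)\<bar> \<partial>(lborel :: (real \<times> real) measure))"

end

theory Submission
  imports Defs
begin

text \<open>
  The mixture kernel at \<open>t\<close> is the product of the exponential densities with
  rates \<open>t\<close> (in \<open>x\<close>) and \<open>\<theta> t\<close> (in \<open>y\<close>). Two exponential densities with rates
  \<open>a, b\<close> are at \<open>L\<^sup>1\<close> distance at most \<open>2 |a - b| / a\<close>, and \<open>L\<^sup>1\<close> distances of
  product densities add up, so the kernels at \<open>t\<close> and \<open>s\<close> are at distance at most
  \<open>4 |t - s| / t\<close>. Pointwise in \<open>(x, y)\<close>, compare the part of \<open>F\<close> on each cell \<open>A\<^sub>j\<close>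
  with the atom \<open>w\<^sub>j \<delta>\<^sub>z\<^sub>j\<close> (and the part on \<open>A\<^sub>0\<close> with nothing): the error is
  bounded by the integral over \<open>t\<close> of the distance between the kernel at \<open>t\<close> and at the
  centre of the cell of \<open>t\<close>, plus \<open>\<Sum>\<^sub>j |F(A\<^sub>j) - w\<^sub>j|\<close> times the kernel at \<open>z\<^sub>j\<close>.
  Integrating in \<open>(x, y)\<close> and swapping the integrals (Tonelli), a point \<open>t \<in> A\<^sub>j\<close>
  contributes at most \<open>4 diam A\<^sub>j / inf A\<^sub>j\<close>, and a point of \<open>A\<^sub>0\<close> contributes \<open>1\<close>.
\<close>

section \<open>Exponential densities on the half-line\<close>

lemma nn_integral_Ioi_eq_has_integral:
  fixes f :: "real \<Rightarrow> real"
  assumes f: "(f has_integral I) {0..}" and nonneg: "\<And>x. 0 < x \<Longrightarrow> 0 \<le> f x"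
  shows "(\<integral>\<^sup>+x. indicator {0<..} x * ennreal (f x) \<partial>lborel) = ennreal I"
proof -
  have "(f has_integral I) {0<..}"
    using f has_integral_interior[of "{0::real..}" f I] by simp
  then have "(\<integral>\<^sup>+x. ennreal (indicator {0<..} x * f x) \<partial>lborel) = ennreal I"
    using nonneg by (intro nn_integral_has_integral_lebesgue) auto
  then show ?thesis
    by (simp add: indicator_mult_ennreal)
qed

lemma nn_integral_Ioi_exp:
  fixes c :: real
  assumes "0 < c"
  shows "(\<integral>\<^sup>+x. indicator {0<..} x * ennreal (exp (- c * x)) \<partial>lborel) = ennreal (1 / c)"
  using has_integral_exp_minus_to_infinity[OF assms, of 0]
  by (intro nn_integral_Ioi_eq_has_integral) auto

lemma nn_integral_Ioi_abs_exp_diff: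
  fixes a b :: real
  assumes "0 < a" "0 < b"
  shows "(\<integral>\<^sup>+x. indicator {0<..} x * ennreal \<bar>exp (- a * x) - exp (- b * x)\<bar> \<partial>lborel)
    = ennreal \<bar>1 / a - 1 / b\<bar>"
proof -
  have *: "(\<integral>\<^sup>+x. indicator {0<..} x * ennreal \<bar>exp (- a * x) - exp (- b * x)\<bar> \<partial>lborel)
    = ennreal (1 / a - 1 / b)" if "0 < a" "a \<le> b" for a b :: real
  proof (rule nn_integral_Ioi_eq_has_integral)
    show "((\<lambda>x. \<bar>exp (- a * x) - exp (- b * x)\<bar>) has_integral 1 / a - 1 / b) {0..}"
    proof (rule has_integral_eq)
      show "((\<lambda>x. exp (- a * x) - exp (- b * x)) has_integral 1 / a - 1 / b) {0..}"
        using has_integral_diff[OF has_integral_exp_minus_to_infinity[of a 0]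
            has_integral_exp_minus_to_infinity[of b 0]] that by simp
    next
      fix x :: real
      assume "x \<in> {0..}"
      then have "a * x \<le> b * x"
        using that by (simp add: mult_right_mono)
      then show "exp (- a * x) - exp (- b * x) = \<bar>exp (- a * x) - exp (- b * x)\<bar>"
        by simp
    qed
  qed simp
  show ?thesis
  proof (cases "a \<le> b")
    case True
    then show ?thesis using * assms by (simp add: frac_le)
  next
    case False
    then show ?thesis using *[of b a] assms by (simp add: abs_minus_commute frac_le)
  qed
qed

text \<open>Unlike \<^const>\<open>exponential_density\<close>, this vanishes at \<open>0\<close>, matching the open
  quadrant in \<^const>\<open>L1_dist\<close>.\<close>

definition exp_density_pos :: "real \<Rightarrow> real \<Rightarrow> real" where
  "exp_density_pos c x = indicator {0<..} x * (c * exp (- c * x))"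

lemma borel_measurable_exp_density_pos [measurable]: "exp_density_pos c \<in> borel_measurable borel"
  unfolding exp_density_pos_def[abs_def] by measurable

lemma exp_density_pos_nonneg: "0 \<le> c \<Longrightarrow> 0 \<le> exp_density_pos c x"
  by (simp add: exp_density_pos_def)

lemma nn_integral_exp_density_pos:
  fixes c :: real
  assumes "0 < c"
  shows "(\<integral>\<^sup>+x. ennreal (exp_density_pos c x) \<partial>lborel) = 1"
proof -
  have "(\<integral>\<^sup>+x. ennreal (exp_density_pos c x) \<partial>lborel)
      = ennreal c * (\<integral>\<^sup>+x. indicator {0<..} x * ennreal (exp (- c * x)) \<partial>lborel)"
    using assms by (subst nn_integral_cmult[symmetric])
      (auto simp: exp_density_pos_def ennreal_mult indicator_mult_ennreal[symmetric] mult_ac)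
  also have "\<dots> = ennreal c * ennreal (1 / c)"
    by (simp only: nn_integral_Ioi_exp[OF assms])
  finally show ?thesis
    using assms by (simp flip: ennreal_mult)
qed

lemma nn_integral_abs_diff_exp_density_pos_le:
  fixes a b :: real
  assumes a: "0 < a" and b: "0 < b"
  shows "(\<integral>\<^sup>+x. ennreal \<bar>exp_density_pos a x - exp_density_pos b x\<bar> \<partial>lborel) \<le> ennreal (2 * \<bar>a - b\<bar> / a)"
proof -
  have "(\<integral>\<^sup>+x. ennreal \<bar>exp_density_pos a x - exp_density_pos b x\<bar> \<partial>lborel)
    \<le> (\<integral>\<^sup>+x. ennreal \<bar>a - b\<bar> * (indicator {0<..} x * ennreal (exp (- a * x)))
          + ennreal b * (indicator {0<..} x * ennreal \<bar>exp (- a * x) - exp (- b * x)\<bar>) \<partial>lborel)"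
  proof (rule nn_integral_mono)
    fix x :: real
    have "\<bar>a * exp (- a * x) - b * exp (- b * x)\<bar>
        = \<bar>(a - b) * exp (- a * x) + b * (exp (- a * x) - exp (- b * x))\<bar>"
      by (simp add: algebra_simps)
    also have "\<dots> \<le> \<bar>(a - b) * exp (- a * x)\<bar> + \<bar>b * (exp (- a * x) - exp (- b * x))\<bar>"
      by (rule abs_triangle_ineq)
    also have "\<dots> = \<bar>a - b\<bar> * exp (- a * x) + b * \<bar>exp (- a * x) - exp (- b * x)\<bar>"
      using b by (simp add: abs_mult)
    finally show "ennreal \<bar>exp_density_pos a x - exp_density_pos b x\<bar>
      \<le> ennreal \<bar>a - b\<bar> * (indicator {0<..} x * ennreal (exp (- a * x)))
          + ennreal b * (indicator {0<..} x * ennreal \<bar>exp (- a * x) - exp (- b * x)\<bar>)"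
      using b by (auto simp: exp_density_pos_def indicator_def ennreal_mult[symmetric]
          ennreal_plus[symmetric] simp del: ennreal_plus)
  qed
  also have "\<dots> = ennreal \<bar>a - b\<bar> * (\<integral>\<^sup>+x. indicator {0<..} x * ennreal (exp (- a * x)) \<partial>lborel)
      + ennreal b * (\<integral>\<^sup>+x. indicator {0<..} x * ennreal \<bar>exp (- a * x) - exp (- b * x)\<bar> \<partial>lborel)"
    by (simp add: nn_integral_add nn_integral_cmult)
  also have "\<dots> = ennreal \<bar>a - b\<bar> * ennreal (1 / a) + ennreal b * ennreal \<bar>1 / a - 1 / b\<bar>"
    by (simp only: nn_integral_Ioi_exp[OF a] nn_integral_Ioi_abs_exp_diff[OF a b])
  also have "\<dots> = ennreal (2 * \<bar>a - b\<bar> / a)"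
  proof -
    have "b * \<bar>1 / a - 1 / b\<bar> = \<bar>a - b\<bar> / a"
      using a b by (simp add: field_simps abs_div_pos abs_if)
    then show ?thesis
      using a b by (simp add: ennreal_mult[symmetric] ennreal_plus[symmetric] del: ennreal_plus)
  qed
  finally show ?thesis .
qed

section \<open>Product densities\<close>

lemma nn_integral_pair_measure_mult:
  fixes G :: "'a \<Rightarrow> ennreal" and H :: "'b \<Rightarrow> ennreal"
  assumes "sigma_finite_measure M1" "sigma_finite_measure M2"
    and [measurable]: "G \<in> borel_measurable M1" "H \<in> borel_measurable M2"
  shows "(\<integral>\<^sup>+q. G (fst q) * H (snd q) \<partial>(M1 \<Otimes>\<^sub>M M2)) = (\<integral>\<^sup>+x. G x \<partial>M1) * (\<integral>\<^sup>+y. H y \<partial>M2)"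
proof -
  interpret pair_sigma_finite M1 M2
    by (rule pair_sigma_finite.intro) fact+
  have "(\<integral>\<^sup>+q. G (fst q) * H (snd q) \<partial>(M1 \<Otimes>\<^sub>M M2)) = (\<integral>\<^sup>+x. \<integral>\<^sup>+y. G x * H y \<partial>M2 \<partial>M1)"
    by (subst M2.nn_integral_fst[symmetric]) auto
  also have "\<dots> = (\<integral>\<^sup>+x. G x * (\<integral>\<^sup>+y. H y \<partial>M2) \<partial>M1)"
    by (simp add: nn_integral_cmult)
  finally show ?thesis
    by (simp add: nn_integral_multc)
qed

lemma nn_integral_abs_diff_pair_measure_mult_le:
  fixes g1 g2 :: "'a \<Rightarrow> real" and h1 h2 :: "'b \<Rightarrow> real"
  assumes "sigma_finite_measure M1" "sigma_finite_measure M2"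
    and [measurable]: "g1 \<in> borel_measurable M1" "g2 \<in> borel_measurable M1"
      "h1 \<in> borel_measurable M2" "h2 \<in> borel_measurable M2"
    and g2_nonneg: "\<And>x. 0 \<le> g2 x" and h1_nonneg: "\<And>y. 0 \<le> h1 y"
  shows "(\<integral>\<^sup>+q. ennreal \<bar>g1 (fst q) * h1 (snd q) - g2 (fst q) * h2 (snd q)\<bar> \<partial>(M1 \<Otimes>\<^sub>M M2))
    \<le> (\<integral>\<^sup>+x. ennreal \<bar>g1 x - g2 x\<bar> \<partial>M1) * (\<integral>\<^sup>+y. ennreal (h1 y) \<partial>M2)
      + (\<integral>\<^sup>+x. ennreal (g2 x) \<partial>M1) * (\<integral>\<^sup>+y. ennreal \<bar>h1 y - h2 y\<bar> \<partial>M2)"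
proof -
  have "(\<integral>\<^sup>+q. ennreal \<bar>g1 (fst q) * h1 (snd q) - g2 (fst q) * h2 (snd q)\<bar> \<partial>(M1 \<Otimes>\<^sub>M M2))
    \<le> (\<integral>\<^sup>+q. ennreal \<bar>g1 (fst q) - g2 (fst q)\<bar> * ennreal (h1 (snd q))
        + ennreal (g2 (fst q)) * ennreal \<bar>h1 (snd q) - h2 (snd q)\<bar> \<partial>(M1 \<Otimes>\<^sub>M M2))"
  proof (rule nn_integral_mono)
    fix q :: "'a \<times> 'b"
    obtain x y where q: "q = (x, y)" by fastforce
    have "\<bar>g1 x * h1 y - g2 x * h2 y\<bar> = \<bar>(g1 x - g2 x) * h1 y + g2 x * (h1 y - h2 y)\<bar>"
      by (simp add: algebra_simps)
    also have "\<dots> \<le> \<bar>g1 x - g2 x\<bar> * h1 y + g2 x * \<bar>h1 y - h2 y\<bar>"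
      using abs_triangle_ineq[of "(g1 x - g2 x) * h1 y" "g2 x * (h1 y - h2 y)"]
        g2_nonneg[of x] h1_nonneg[of y] by (simp add: abs_mult)
    finally show "ennreal \<bar>g1 (fst q) * h1 (snd q) - g2 (fst q) * h2 (snd q)\<bar>
      \<le> ennreal \<bar>g1 (fst q) - g2 (fst q)\<bar> * ennreal (h1 (snd q))
        + ennreal (g2 (fst q)) * ennreal \<bar>h1 (snd q) - h2 (snd q)\<bar>"
      using g2_nonneg[of x] h1_nonneg[of y] unfolding q
      by (simp add: ennreal_mult[symmetric] ennreal_plus[symmetric] ennreal_leI del: ennreal_plus)
  qed
  also have "\<dots> = (\<integral>\<^sup>+x. ennreal \<bar>g1 x - g2 x\<bar> \<partial>M1) * (\<integral>\<^sup>+y. ennreal (h1 y) \<partial>M2)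
      + (\<integral>\<^sup>+x. ennreal (g2 x) \<partial>M1) * (\<integral>\<^sup>+y. ennreal \<bar>h1 y - h2 y\<bar> \<partial>M2)"
    using nn_integral_pair_measure_mult[OF assms(1,2), of "\<lambda>x. ennreal \<bar>g1 x - g2 x\<bar>" "\<lambda>y. ennreal (h1 y)"]
      nn_integral_pair_measure_mult[OF assms(1,2), of "\<lambda>x. ennreal (g2 x)" "\<lambda>y. ennreal \<bar>h1 y - h2 y\<bar>"]
    by (simp add: nn_integral_add)
  finally show ?thesis .
qed

section \<open>The mixture kernel\<close>

text \<open>The density of \<open>(X, Y)\<close> given \<open>Z = t\<close>, where \<open>X\<close> and \<open>Y\<close> are independent
  exponential variables with rates \<open>t\<close> and \<open>\<theta> t\<close>; \<^const>\<open>pmix\<close> integrates it against \<open>F\<close>.\<close>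

definition cond_density :: "real \<Rightarrow> real \<Rightarrow> real \<Rightarrow> real \<Rightarrow> real" where
  "cond_density \<theta> t x y = t\<^sup>2 * \<theta> * exp (- t * (x + \<theta> * y))"

lemma cond_density_nonneg: "0 \<le> \<theta> \<Longrightarrow> 0 \<le> cond_density \<theta> t x y"
  by (simp add: cond_density_def)

lemma power2_mult_exp_neg_le:
  fixes s t :: real
  assumes "0 < s" "0 \<le> t"
  shows "t\<^sup>2 * exp (- t * s) \<le> 2 / s\<^sup>2"
proof -
  have "0 \<le> t * s"
    using assms by simp
  then have "(t * s)\<^sup>2 / 2 \<le> exp (t * s)"
    using exp_lower_Taylor_quadratic[of "t * s"] by linarith
  then show ?thesis
    using assms by (simp add: exp_minus field_simps power_mult_distrib)
qed

lemma cond_density_le: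
  assumes "0 < \<theta>" "0 \<le> t" "0 < x + \<theta> * y"
  shows "cond_density \<theta> t x y \<le> 2 * \<theta> / (x + \<theta> * y)\<^sup>2"
  using mult_left_mono[OF power2_mult_exp_neg_le[OF assms(3,2)], of \<theta>] assms(1)
  by (simp add: cond_density_def mult_ac)

lemma integrable_cond_density:
  assumes "finite_measure F" and "sets F = sets borel" and "AE t in F. 0 < t"
    and "0 < \<theta>" and "0 < x + \<theta> * y"
  shows "integrable F (\<lambda>t. cond_density \<theta> t x y)"
proof -
  interpret finite_measure F by fact
  have [measurable_cong]: "sets F = sets borel"
    by fact
  show ?thesis
  proof (rule integrable_const_bound[where B = "2 * \<theta> / (x + \<theta> * y)\<^sup>2"])
    show "AE t in F. norm (cond_density \<theta> t x y) \<le> 2 * \<theta> / (x + \<theta> * y)\<^sup>2"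
      using \<open>AE t in F. 0 < t\<close>
      by eventually_elim (use assms(4,5) in \<open>simp add: cond_density_le cond_density_nonneg\<close>)
  qed (simp add: cond_density_def)
qed

lemma indicator_quadrant_mult_cond_density:
  "indicator ({0<..} \<times> {0<..}) q * cond_density \<theta> t (fst q) (snd q)
    = exp_density_pos t (fst q) * exp_density_pos (\<theta> * t) (snd q)"
  by (cases q) (simp add: cond_density_def exp_density_pos_def indicator_def power2_eq_square
      exp_add[symmetric] algebra_simps)

lemma nn_integral_cond_density:
  assumes "0 < \<theta>" "0 < t"
  shows "(\<integral>\<^sup>+q. indicator ({0<..} \<times> {0<..}) q * ennreal (cond_density \<theta> t (fst q) (snd q))
    \<partial>(lborel :: (real \<times> real) measure)) = 1"
proof -
  have "(\<integral>\<^sup>+q. indicator ({0<..} \<times> {0<..}) q * ennreal (cond_density \<theta> t (fst q) (snd q)) \<partial>lborel)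
    = (\<integral>\<^sup>+q. ennreal (exp_density_pos t (fst q)) * ennreal (exp_density_pos (\<theta> * t) (snd q))
        \<partial>(lborel \<Otimes>\<^sub>M lborel))"
    using assms by (simp add: lborel_prod indicator_mult_ennreal indicator_quadrant_mult_cond_density
        exp_density_pos_nonneg flip: ennreal_mult)

  also have "\<dots> = 1"
    using assms nn_integral_pair_measure_mult[OF sigma_finite_lborel sigma_finite_lborel,
        of "\<lambda>x. ennreal (exp_density_pos t x)" "\<lambda>y. ennreal (exp_density_pos (\<theta> * t) y)"]
    by (simp add: nn_integral_exp_density_pos)
  finally show ?thesis .
qed

lemma nn_integral_abs_diff_cond_density_le:
  assumes "0 < \<theta>" "0 < t" "0 < s"
  shows "(\<integral>\<^sup>+q. indicator ({0<..} \<times> {0<..}) q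
      * ennreal \<bar>cond_density \<theta> t (fst q) (snd q) - cond_density \<theta> s (fst q) (snd q)\<bar>
    \<partial>(lborel :: (real \<times> real) measure)) \<le> ennreal (4 * \<bar>t - s\<bar> / t)"
proof -
  let ?g = exp_density_pos
  have "(\<integral>\<^sup>+q. indicator ({0<..} \<times> {0<..}) q
      * ennreal \<bar>cond_density \<theta> t (fst q) (snd q) - cond_density \<theta> s (fst q) (snd q)\<bar> \<partial>lborel)
    = (\<integral>\<^sup>+q. ennreal \<bar>?g t (fst q) * ?g (\<theta> * t) (snd q) - ?g s (fst q) * ?g (\<theta> * s) (snd q)\<bar>
        \<partial>(lborel \<Otimes>\<^sub>M lborel))"
    by (simp add: lborel_prod indicator_mult_ennreal flip: indicator_quadrant_mult_cond_density)
      (auto simp: indicator_def intro!: nn_integral_cong)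
  also have "\<dots> \<le> ennreal (2 * \<bar>t - s\<bar> / t) * 1 + 1 * ennreal (2 * \<bar>\<theta> * t - \<theta> * s\<bar> / (\<theta> * t))"
    using assms
    by (intro order.trans[OF nn_integral_abs_diff_pair_measure_mult_le] add_mono mult_mono)
      (auto simp: sigma_finite_lborel exp_density_pos_nonneg nn_integral_exp_density_pos
        nn_integral_abs_diff_exp_density_pos_le)
  also have "\<dots> = ennreal (4 * \<bar>t - s\<bar> / t)"
    using assms by (simp add: abs_mult flip: right_diff_distrib ennreal_plus)
  finally show ?thesis .
qed

section \<open>Comparing a measure with point masses on a partition\<close>

lemma integral_diff_sum_eq_sum_cells:
  fixes M :: "'a measure" and \<phi> :: "'a \<Rightarrow> real" and A :: "'i \<Rightarrow> 'a set" and w c :: "'i \<Rightarrow> real"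
  assumes "finite_measure M" and "finite I"
    and A_sets: "\<And>i. i \<in> I \<Longrightarrow> A i \<in> sets M" and A_disj: "disjoint_family_on A I"
    and A_AE: "AE t in M. t \<in> (\<Union>i\<in>I. A i)"
    and \<phi>: "integrable M \<phi>"
  shows "(\<integral>t. \<phi> t \<partial>M) - (\<Sum>i\<in>I. w i * c i)
    = (\<Sum>i\<in>I. (\<integral>t. (\<phi> t - c i) * indicator (A i) t \<partial>M) + (measure M (A i) - w i) * c i)"
proof -
  interpret finite_measure M by fact
  have "AE t in M. \<phi> t = (\<Sum>i\<in>I. \<phi> t * indicator (A i) t)"
    using A_AE by eventually_elim (auto simp: sum_indicator_disjoint_family[OF A_disj _ \<open>finite I\<close>])
  then have "(\<integral>t. \<phi> t \<partial>M) = (\<integral>t. (\<Sum>i\<in>I. \<phi> t * indicator (A i) t) \<partial>M)"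
    using borel_measurable_integrable[OF \<phi>] A_sets
    by (intro integral_cong_AE) (auto intro!: borel_measurable_sum borel_measurable_times)
  also have "\<dots> = (\<Sum>i\<in>I. \<integral>t. \<phi> t * indicator (A i) t \<partial>M)"
    using A_sets \<phi> by (simp add: integrable_real_mult_indicator)
  also have "\<dots> = (\<Sum>i\<in>I. (\<integral>t. (\<phi> t - c i) * indicator (A i) t \<partial>M) + measure M (A i) * c i)"
  proof (rule sum.cong[OF refl])
    fix i
    assume i: "i \<in> I"
    have "integrable M (\<lambda>t. \<phi> t * indicator (A i) t)"
      using A_sets[OF i] \<phi> by (rule integrable_real_mult_indicator)
    moreover have "integrable M (\<lambda>t. c i * indicator (A i) t)"
      using A_sets[OF i] integrable_const by (rule integrable_real_mult_indicator)
    ultimately have "(\<integral>t. (\<phi> t - c i) * indicator (A i) t \<partial>M)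
      = (\<integral>t. \<phi> t * indicator (A i) t \<partial>M) - (\<integral>t. c i * indicator (A i) t \<partial>M)"
      unfolding left_diff_distrib by (rule Bochner_Integration.integral_diff)
    then show "(\<integral>t. \<phi> t * indicator (A i) t \<partial>M)
      = (\<integral>t. (\<phi> t - c i) * indicator (A i) t \<partial>M) + measure M (A i) * c i"
      using A_sets[OF i] by simp
  qed
  finally show ?thesis
    by (simp add: algebra_simps sum.distrib sum_subtractf)
qed

lemma abs_integral_diff_sum_le:
  fixes M :: "'a measure" and \<phi> :: "'a \<Rightarrow> real" and A :: "'i \<Rightarrow> 'a set" and w c :: "'i \<Rightarrow> real"
  assumes "finite_measure M" and "finite I"
    and A_sets: "\<And>i. i \<in> I \<Longrightarrow> A i \<in> sets M" and A_disj: "disjoint_family_on A I"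
    and A_AE: "AE t in M. t \<in> (\<Union>i\<in>I. A i)"
    and \<phi>: "integrable M \<phi>"
  shows "ennreal \<bar>(\<integral>t. \<phi> t \<partial>M) - (\<Sum>i\<in>I. w i * c i)\<bar>
    \<le> (\<integral>\<^sup>+t. (\<Sum>i\<in>I. ennreal \<bar>\<phi> t - c i\<bar> * indicator (A i) t) \<partial>M)
      + ennreal (\<Sum>i\<in>I. \<bar>measure M (A i) - w i\<bar> * \<bar>c i\<bar>)"
proof -
  interpret finite_measure M by fact
  have int_abs: "integrable M (\<lambda>t. \<bar>\<phi> t - c i\<bar> * indicator (A i) t)" if "i \<in> I" for i
    using \<phi> A_sets[OF that]
    by (intro integrable_real_mult_indicator integrable_abs Bochner_Integration.integrable_diff integrable_const)
  have "\<bar>(\<integral>t. \<phi> t \<partial>M) - (\<Sum>i\<in>I. w i * c i)\<bar>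
    = \<bar>\<Sum>i\<in>I. (\<integral>t. (\<phi> t - c i) * indicator (A i) t \<partial>M) + (measure M (A i) - w i) * c i\<bar>"
    by (simp only: integral_diff_sum_eq_sum_cells[OF assms])
  also have "\<dots> \<le> (\<Sum>i\<in>I. (\<integral>t. \<bar>\<phi> t - c i\<bar> * indicator (A i) t \<partial>M)
      + \<bar>measure M (A i) - w i\<bar> * \<bar>c i\<bar>)"
  proof (rule order.trans[OF sum_abs sum_mono])
    fix i
    have "\<bar>\<integral>t. (\<phi> t - c i) * indicator (A i) t \<partial>M\<bar> \<le> (\<integral>t. \<bar>\<phi> t - c i\<bar> * indicator (A i) t \<partial>M)"
      using integral_abs_bound[of M "\<lambda>t. (\<phi> t - c i) * indicator (A i) t"] by (simp add: abs_mult)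
    then show "\<bar>(\<integral>t. (\<phi> t - c i) * indicator (A i) t \<partial>M) + (measure M (A i) - w i) * c i\<bar>
      \<le> (\<integral>t. \<bar>\<phi> t - c i\<bar> * indicator (A i) t \<partial>M) + \<bar>measure M (A i) - w i\<bar> * \<bar>c i\<bar>"
      by (simp add: abs_mult order.trans[OF abs_triangle_ineq])
  qed
  finally have "ennreal \<bar>(\<integral>t. \<phi> t \<partial>M) - (\<Sum>i\<in>I. w i * c i)\<bar>
    \<le> ennreal (\<Sum>i\<in>I. (\<integral>t. \<bar>\<phi> t - c i\<bar> * indicator (A i) t \<partial>M))
      + ennreal (\<Sum>i\<in>I. \<bar>measure M (A i) - w i\<bar> * \<bar>c i\<bar>)"
    by (simp add: sum.distrib ennreal_plus[symmetric] ennreal_leI sum_nonneg del: ennreal_plus)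
  also have "ennreal (\<Sum>i\<in>I. (\<integral>t. \<bar>\<phi> t - c i\<bar> * indicator (A i) t \<partial>M))
    = (\<Sum>i\<in>I. \<integral>\<^sup>+t. ennreal (\<bar>\<phi> t - c i\<bar> * indicator (A i) t) \<partial>M)"
    using int_abs by (subst sum_ennreal[symmetric]) (auto simp: nn_integral_eq_integral)
  also have "\<dots> = (\<integral>\<^sup>+t. (\<Sum>i\<in>I. ennreal (\<bar>\<phi> t - c i\<bar> * indicator (A i) t)) \<partial>M)"
    using int_abs
    by (intro nn_integral_sum[symmetric] measurable_compose[OF borel_measurable_integrable measurable_ennreal])
  also have "\<dots> = (\<integral>\<^sup>+t. (\<Sum>i\<in>I. ennreal \<bar>\<phi> t - c i\<bar> * indicator (A i) t) \<partial>M)"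
    by (intro nn_integral_cong sum.cong refl) (simp split: split_indicator)
  finally show ?thesis .
qed

lemma integral_discrete_mix:
  fixes f :: "real \<Rightarrow> real"
  assumes "\<And>j. j \<in> {1..N} \<Longrightarrow> 0 \<le> w j"
  shows "(\<integral>t. f t \<partial>discrete_mix N w z) = (\<Sum>j\<in>{1..N}. w j * f (z j))"
proof -
  define g where "g t = (\<Sum>j\<in>{1..N}. if z j = t then w j else 0)" for t
  have "(\<integral>t. f t \<partial>discrete_mix N w z) = (\<integral>t. g t *\<^sub>R f t \<partial>count_space UNIV)"
    unfolding discrete_mix_def g_def using assms by (intro integral_density) (auto intro!: sum_nonneg)
  also have "\<dots> = (\<integral>t. (\<Sum>j\<in>{1..N}. indicator {z j} t * (w j * f (z j))) \<partial>count_space UNIV)"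
    unfolding g_def real_scaleR_def sum_distrib_right
    by (intro Bochner_Integration.integral_cong sum.cong refl) (auto simp: indicator_def)
  also have "\<dots> = (\<Sum>j\<in>{1..N}. \<integral>t. indicator {z j} t * (w j * f (z j)) \<partial>count_space UNIV)"
    by (intro Bochner_Integration.integral_sum integrable_real_mult_indicator) auto
  also have "\<dots> = (\<Sum>j\<in>{1..N}. w j * f (z j))"
    by (simp add: measure_count_space)
  finally show ?thesis .
qed

lemma pmix_discrete_mix:
  assumes "\<And>j. j \<in> {1..N} \<Longrightarrow> 0 \<le> w j"
  shows "pmix \<theta> (discrete_mix N w z) x y = (\<Sum>j\<in>{1..N}. w j * cond_density \<theta> (z j) x y)"
  unfolding pmix_def cond_density_def[symmetric] by (rule integral_discrete_mix[OF assms])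

section \<open>Cells of the partition\<close>

lemma ennreal_abs_diff_div_le_diam_ext:
  fixes S :: "real set"
  assumes "t \<in> S" "u \<in> S" "bdd_below S" "0 < Inf S"
  shows "ennreal (\<bar>t - u\<bar> / t) \<le> diam_ext S / ennreal (Inf S)"
proof (cases "diam_ext S" rule: ennreal_cases)
  case (real d)
  have "ennreal \<bar>t - u\<bar> \<le> diam_ext S"
    unfolding diam_ext_def by (rule SUP_upper2[OF assms(1)], rule SUP_upper2[OF assms(2)]) simp
  then have "\<bar>t - u\<bar> \<le> d"
    using real by (simp add: ennreal_le_iff)
  moreover have "Inf S \<le> t"
    using assms by (intro cInf_lower)
  ultimately have "\<bar>t - u\<bar> / t \<le> d / Inf S"
    using assms(4) by (intro frac_le) auto
  then show ?thesis
    using real assms(4) by (simp add: divide_ennreal ennreal_leI)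
next
  case top
  then show ?thesis
    using assms(4) by (simp add: ennreal_top_divide)
qed

lemma nn_integral_abs_diff_cond_density_le_diam_ext:
  fixes S :: "real set"
  assumes "0 < \<theta>" and "t \<in> S" "s \<in> S" and S_pos: "S \<subseteq> {0<..}" and "0 < Inf S"
  shows "(\<integral>\<^sup>+q. indicator ({0<..} \<times> {0<..}) q
      * ennreal \<bar>cond_density \<theta> t (fst q) (snd q) - cond_density \<theta> s (fst q) (snd q)\<bar>
    \<partial>(lborel :: (real \<times> real) measure)) \<le> 4 * (diam_ext S / ennreal (Inf S))"
proof -
  have "0 < t" "0 < s"
    using assms S_pos by auto
  have "bdd_below S"
    using S_pos by (intro bdd_belowI[of _ 0]) force
  have "(\<integral>\<^sup>+q. indicator ({0<..} \<times> {0<..}) q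
      * ennreal \<bar>cond_density \<theta> t (fst q) (snd q) - cond_density \<theta> s (fst q) (snd q)\<bar> \<partial>lborel)
    \<le> ennreal (4 * \<bar>t - s\<bar> / t)"
    using \<open>0 < \<theta>\<close> \<open>0 < t\<close> \<open>0 < s\<close> by (rule nn_integral_abs_diff_cond_density_le)
  also have "\<dots> = 4 * ennreal (\<bar>t - s\<bar> / t)"
    using \<open>0 < t\<close> by (subst times_divide_eq_right[symmetric], subst ennreal_mult) auto
  also have "\<dots> \<le> 4 * (diam_ext S / ennreal (Inf S))"
    using assms \<open>bdd_below S\<close> by (intro mult_left_mono ennreal_abs_diff_div_le_diam_ext) auto
  finally show ?thesis .
qed

text \<open>The cell \<open>A 0\<close> carries no atom of the discrete measure, so its centre has density \<open>0\<close>.\<close>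

definition cell_centre_density :: "real \<Rightarrow> (nat \<Rightarrow> real) \<Rightarrow> nat \<Rightarrow> real \<times> real \<Rightarrow> real" where
  "cell_centre_density \<theta> z j q = (if j = 0 then 0 else cond_density \<theta> (z j) (fst q) (snd q))"

definition cell_defect ::
    "real \<Rightarrow> nat \<Rightarrow> (nat \<Rightarrow> real set) \<Rightarrow> (nat \<Rightarrow> real) \<Rightarrow> real \<times> real \<Rightarrow> real \<Rightarrow> ennreal" where
  "cell_defect \<theta> N A z q t = (\<Sum>j\<in>{0..N}.
     ennreal \<bar>cond_density \<theta> t (fst q) (snd q) - cell_centre_density \<theta> z j q\<bar> * indicator (A j) t)"

lemma borel_measurable_cell_defect:
  assumes "sets M = sets borel" and "\<And>j. j \<le> N \<Longrightarrow> A j \<in> sets borel"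
  shows "(\<lambda>(q, t). cell_defect \<theta> N A z q t) \<in> borel_measurable ((lborel :: (real \<times> real) measure) \<Otimes>\<^sub>M M)"
proof -
  have [measurable_cong]: "sets M = sets borel"
    by fact
  have "(\<lambda>(q, t). ennreal \<bar>cond_density \<theta> t (fst q) (snd q) - cell_centre_density \<theta> z j q\<bar>
      * indicator (A j) t) \<in> borel_measurable (lborel \<Otimes>\<^sub>M M)" if "j \<in> {0..N}" for j
  proof -
    have [measurable]: "A j \<in> sets borel"
      using assms(2) that by simp
    show ?thesis
      unfolding cell_centre_density_def cond_density_def lborel_prod[symmetric] by measurable
  qed
  then show ?thesis
    unfolding cell_defect_def case_prod_beta' by (rule borel_measurable_sum)
qed

lemma ennreal_abs_pmix_diff_le:
  fixes F :: "real measure" and A :: "nat \<Rightarrow> real set" and w z :: "nat \<Rightarrow> real"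
  assumes "0 < \<theta>" and "prob_space F" and F_sets: "sets F = sets borel" and F_pos: "AE t in F. 0 < t"
    and A_meas: "\<And>j. j \<le> N \<Longrightarrow> A j \<in> sets borel" and A_disj: "disjoint_family_on A {0..N}"
    and A_cover: "(\<Union>j\<in>{0..N}. A j) = {0<..}"
    and w_nonneg: "\<And>j. j \<in> {1..N} \<Longrightarrow> 0 \<le> w j"
    and q: "q \<in> {0<..} \<times> {0<..}"
  shows "ennreal \<bar>pmix \<theta> F (fst q) (snd q) - pmix \<theta> (discrete_mix N w z) (fst q) (snd q)\<bar>
    \<le> (\<integral>\<^sup>+t. cell_defect \<theta> N A z q t \<partial>F)
      + (\<Sum>j\<in>{1..N}. ennreal \<bar>measure F (A j) - w j\<bar> * ennreal (cond_density \<theta> (z j) (fst q) (snd q)))"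
proof -
  interpret prob_space F by fact
  obtain x y where xy: "q = (x, y)" "0 < x" "0 < y"
    using q by auto
  have int: "integrable F (\<lambda>t. cond_density \<theta> t x y)"
    using xy \<open>0 < \<theta>\<close>
    by (intro integrable_cond_density[OF finite_measure_axioms F_sets F_pos]) (auto intro: add_pos_pos)
  have pmix_F: "pmix \<theta> F x y = (\<integral>t. cond_density \<theta> t x y \<partial>F)"
    by (simp add: pmix_def cond_density_def)
  have "pmix \<theta> (discrete_mix N w z) x y = (\<Sum>j\<in>{1..N}. w j * cond_density \<theta> (z j) x y)"
    using w_nonneg by (rule pmix_discrete_mix)
  then have pmix_discrete: "pmix \<theta> (discrete_mix N w z) x y = (\<Sum>j\<in>{0..N}. w j * cell_centre_density \<theta> z j q)"
    by (simp add: cell_centre_density_def xy sum.atLeast_Suc_atMost)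
  have "AE t in F. t \<in> (\<Union>j\<in>{0..N}. A j)"
    using F_pos by (simp add: A_cover)
  then have "ennreal \<bar>pmix \<theta> F x y - pmix \<theta> (discrete_mix N w z) x y\<bar>
    \<le> (\<integral>\<^sup>+t. cell_defect \<theta> N A z q t \<partial>F)
      + ennreal (\<Sum>j\<in>{0..N}. \<bar>measure F (A j) - w j\<bar> * \<bar>cell_centre_density \<theta> z j q\<bar>)"
    unfolding pmix_F pmix_discrete cell_defect_def
    using abs_integral_diff_sum_le[OF finite_measure_axioms _ _ A_disj _ int] A_meas F_sets xy
    by simp
  also have "ennreal (\<Sum>j\<in>{0..N}. \<bar>measure F (A j) - w j\<bar> * \<bar>cell_centre_density \<theta> z j q\<bar>)
    = (\<Sum>j\<in>{1..N}. ennreal \<bar>measure F (A j) - w j\<bar> * ennreal (cond_density \<theta> (z j) x y))"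
    using \<open>0 < \<theta>\<close>
    by (simp add: sum.atLeast_Suc_atMost cell_centre_density_def xy cond_density_nonneg ennreal_mult
        flip: sum_ennreal)
  finally show ?thesis
    by (simp add: xy)
qed

lemma nn_integral_cell_defect_le:
  fixes A :: "nat \<Rightarrow> real set" and z :: "nat \<Rightarrow> real"
  assumes "0 < \<theta>" and A_disj: "disjoint_family_on A {0..N}"
    and A_pos: "\<And>j. j \<le> N \<Longrightarrow> A j \<subseteq> {0<..}"
    and m_pos: "\<And>j. j \<in> {1..N} \<Longrightarrow> 0 < Inf (A j)"
    and z_in: "\<And>j. j \<in> {1..N} \<Longrightarrow> z j \<in> A j"
  shows "(\<integral>\<^sup>+q. indicator ({0<..} \<times> {0<..}) q * cell_defect \<theta> N A z q t \<partial>lborel)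
    \<le> indicator (A 0) t + 4 * (MAX j\<in>{1..N}. diam_ext (A j) / ennreal (Inf (A j)))"
    (is "?I \<le> _ + 4 * ?M")
proof (cases "\<exists>j\<in>{0..N}. t \<in> A j")
  case False
  then have "cell_defect \<theta> N A z q t = 0" for q
    by (simp add: cell_defect_def)
  then show ?thesis
    by simp
next
  case True
  then obtain j where j: "j \<in> {0..N}" "t \<in> A j"
    by blast
  have "0 < t"
    using A_pos j by auto
  have defect_eq: "cell_defect \<theta> N A z q t
      = ennreal \<bar>cond_density \<theta> t (fst q) (snd q) - cell_centre_density \<theta> z j q\<bar>" for q
    unfolding cell_defect_def using sum_indicator_disjoint_family[OF A_disj j(2)] j(1) by simp
  show ?thesis
  proof (cases "j = 0")
    case True
    have "?I = 1"
      using nn_integral_cond_density[OF \<open>0 < \<theta>\<close> \<open>0 < t\<close>] \<open>0 < \<theta>\<close>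
      by (simp add: defect_eq cell_centre_density_def True cond_density_nonneg)
    then show ?thesis
      using j True by simp
  next
    case False
    then have j1: "j \<in> {1..N}"
      using j by simp
    have "?I \<le> 4 * (diam_ext (A j) / ennreal (Inf (A j)))"
      using nn_integral_abs_diff_cond_density_le_diam_ext[OF \<open>0 < \<theta>\<close> j(2) z_in[OF j1]] A_pos j m_pos[OF j1]
      by (simp add: defect_eq cell_centre_density_def False)
    also have "\<dots> \<le> 4 * ?M"
      using j1 by (intro mult_left_mono Max_ge) auto
    finally show ?thesis
      by (simp add: add_increasing)
  qed
qed

lemma L1_dist_pmix_discrete_mix_le:
  fixes F :: "real measure" and A :: "nat \<Rightarrow> real set" and w z :: "nat \<Rightarrow> real"
  assumes "0 < \<theta>" and "prob_space F" and F_sets: "sets F = sets borel" and "AE t in F. 0 < t"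
    and A_meas: "\<And>j. j \<le> N \<Longrightarrow> A j \<in> sets borel" and "disjoint_family_on A {0..N}"
    and "(\<Union>j\<in>{0..N}. A j) = {0<..}"
    and "\<And>j. j \<in> {1..N} \<Longrightarrow> 0 \<le> w j" and z_pos: "\<And>j. j \<in> {1..N} \<Longrightarrow> 0 < z j"
  shows "L1_dist (pmix \<theta> F) (pmix \<theta> (discrete_mix N w z))
    \<le> (\<integral>\<^sup>+t. \<integral>\<^sup>+q. indicator ({0<..} \<times> {0<..}) q * cell_defect \<theta> N A z q t \<partial>lborel \<partial>F)
      + ennreal (\<Sum>j\<in>{1..N}. \<bar>measure F (A j) - w j\<bar>)"
proof -
  interpret F: prob_space F by fact
  interpret pair_sigma_finite "lborel :: (real \<times> real) measure" F
    by (intro pair_sigma_finite.intro sigma_finite_lborel F.sigma_finite_measure_axioms)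
  define S :: "(real \<times> real) set" where "S = {0<..} \<times> {0<..}"
  let ?\<Phi> = "cell_defect \<theta> N A z"
  let ?d = "\<lambda>j. ennreal \<bar>measure F (A j) - w j\<bar>"
  have density_meas: "(\<lambda>q. indicator S q * ennreal (cond_density \<theta> s (fst q) (snd q))) \<in> borel_measurable lborel"
    for s
    unfolding S_def cond_density_def lborel_prod[symmetric] by measurable
  have \<Phi>_meas: "(\<lambda>(q, t). indicator S q * ?\<Phi> q t) \<in> borel_measurable (lborel \<Otimes>\<^sub>M F)"
    using borel_measurable_cell_defect[OF F_sets A_meas] unfolding S_def lborel_prod[symmetric] by measurable
  have "L1_dist (pmix \<theta> F) (pmix \<theta> (discrete_mix N w z))
    = (\<integral>\<^sup>+q. indicator S q * ennreal \<bar>pmix \<theta> F (fst q) (snd q) - pmix \<theta> (discrete_mix N w z) (fst q) (snd q)\<bar> \<partial>lborel)"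
    by (simp add: L1_dist_def S_def)
  also have "\<dots> \<le> (\<integral>\<^sup>+q. (\<integral>\<^sup>+t. indicator S q * ?\<Phi> q t \<partial>F)
      + (\<Sum>j\<in>{1..N}. ?d j * (indicator S q * ennreal (cond_density \<theta> (z j) (fst q) (snd q)))) \<partial>lborel)"
    using ennreal_abs_pmix_diff_le[OF assms(1-8)]
    by (intro nn_integral_mono) (auto simp: S_def split: split_indicator)
  also have "\<dots> = (\<integral>\<^sup>+q. \<integral>\<^sup>+t. indicator S q * ?\<Phi> q t \<partial>F \<partial>lborel)
      + (\<Sum>j\<in>{1..N}. ?d j * (\<integral>\<^sup>+q. indicator S q * ennreal (cond_density \<theta> (z j) (fst q) (snd q)) \<partial>lborel))"
    using F.borel_measurable_nn_integral[OF \<Phi>_meas] density_meas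
    by (subst nn_integral_add) (auto intro!: borel_measurable_sum simp: nn_integral_sum nn_integral_cmult)
  also have "\<dots> = (\<integral>\<^sup>+t. \<integral>\<^sup>+q. indicator S q * ?\<Phi> q t \<partial>lborel \<partial>F) + (\<Sum>j\<in>{1..N}. ?d j)"
    using Fubini'[OF \<Phi>_meas] nn_integral_cond_density[OF \<open>0 < \<theta>\<close> z_pos] by (simp add: S_def)
  finally show ?thesis
    by (simp add: S_def sum_ennreal)
qed

theorem mainTheorem5:
  fixes \<theta>0 :: real and F :: "real measure" and N :: nat
    and A :: "nat \<Rightarrow> real set" and w z :: "nat \<Rightarrow> real"
  assumes theta_pos: "\<theta>0 > 0"
    and F_prob: "prob_space F" and F_sets: "sets F = sets borel"
    and F_pos: "measure F {0<..} = 1"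
    and A_meas: "\<And>j. j \<le> N \<Longrightarrow> A j \<in> sets borel"
    and A_disj: "disjoint_family_on A {0..N}"
    and A_cover: "(\<Union>j\<in>{0..N}. A j) = {0<..}"
    and m_pos: "\<And>j. j \<in> {1..N} \<Longrightarrow> Inf (A j) > 0"
    and w_nonneg: "\<And>j. j \<in> {1..N} \<Longrightarrow> w j \<ge> 0"
    and w_sum: "(\<Sum>j\<in>{1..N}. w j) = 1"
    and z_in: "\<And>j. j \<in> {1..N} \<Longrightarrow> z j \<in> A j"
  shows "L1_dist (pmix \<theta>0 F) (pmix \<theta>0 (discrete_mix N w z))
         \<le> 4 * (MAX j\<in>{1..N}. diam_ext (A j) / ennreal (Inf (A j)))
           + ennreal (\<Sum>j\<in>{1..N}. \<bar>measure F (A j) - w j\<bar>)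
           + ennreal (measure F (A 0))"
proof -
  interpret F: prob_space F by (fact F_prob)
  define M where "M = (MAX j\<in>{1..N}. diam_ext (A j) / ennreal (Inf (A j)))"
  have A_pos: "\<And>j. j \<le> N \<Longrightarrow> A j \<subseteq> {0<..}"
    using A_cover by auto
  have F_AE_pos: "AE t in F. 0 < t"
    using F.AE_prob_1[OF F_pos] by simp
  have z_pos: "\<And>j. j \<in> {1..N} \<Longrightarrow> 0 < z j"
    using z_in A_pos by force
  have "L1_dist (pmix \<theta>0 F) (pmix \<theta>0 (discrete_mix N w z))
    \<le> (\<integral>\<^sup>+t. \<integral>\<^sup>+q. indicator ({0<..} \<times> {0<..}) q * cell_defect \<theta>0 N A z q t \<partial>lborel \<partial>F)
      + ennreal (\<Sum>j\<in>{1..N}. \<bar>measure F (A j) - w j\<bar>)"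
    by (rule L1_dist_pmix_discrete_mix_le[OF theta_pos F_prob F_sets F_AE_pos A_meas A_disj A_cover
          w_nonneg z_pos])
  also have "\<dots> \<le> (\<integral>\<^sup>+t. indicator (A 0) t + 4 * M \<partial>F) + ennreal (\<Sum>j\<in>{1..N}. \<bar>measure F (A j) - w j\<bar>)"
    using nn_integral_cell_defect_le[OF theta_pos A_disj A_pos m_pos z_in]
    by (intro add_right_mono nn_integral_mono) (simp add: M_def)
  also have "\<dots> = ennreal (measure F (A 0)) + 4 * M + ennreal (\<Sum>j\<in>{1..N}. \<bar>measure F (A j) - w j\<bar>)"
    using A_meas[of 0] F_sets by (simp add: nn_integral_add F.emeasure_eq_measure F.prob_space)
  finally show ?thesis
    by (simp add: M_def add_ac)
qed

end
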